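(* Let $M_1,\dots,M_k$ be matroids on pairwise disjoint finite sets $S_1,\dots,S_k$, let $S=S_1\cup\cdots\cup S_k$, and let $L=M_1\mathbin{\Box}\cdots\mathbin{\Box} M_k$. Then $A\subseteq S$ is independent in $L$ if and only if $$\sum_{i=1}^{j-1}\lambda_{M_i}(A\cap S_i)\ \geq\ \sum_{i=1}^{j}\nu_{M_i}(A\cap S_i)$$ for all $j$ with $1\leq j\leq k$.
   Context: For a matroid $M$ on $S$ write $\rho_M$ for rank, $\rho(M)=\rho_M(S)$, $\nu_M(A)=|A|-\rho_M(A)$, $\lambda_M(A)=\rho(M)-\rho_M(A)$. For matroids $M$ on $S$ and $N$ on $T$ with $S\cap T=\emptyset$, the free product $M\mathbin{\Box} N$ is the matroid on $S\cup T$ whose independent sets are those $A$ with $A\cap S$ independent in $M$ and $\lambda_M(A\cap S)\geq\nu_N(A\cap T)$. Free product is associative, so the iterated product needs no parentheses. *)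

theory Defs
  imports Main
begin

definition matroid :: "'a set \<Rightarrow> ('a set \<Rightarrow> bool) \<Rightarrow> bool" where
  "matroid E ind \<longleftrightarrow>
     finite E \<and> ind {} \<and>
     (\<forall>A. ind A \<longrightarrow> A \<subseteq> E) \<and>
     (\<forall>A B. ind B \<longrightarrow> A \<subseteq> B \<longrightarrow> ind A) \<and>
     (\<forall>A B. ind A \<longrightarrow> ind B \<longrightarrow> card A < card B \<longrightarrow> (\<exists>x\<in>B - A. ind (insert x A)))"

definition rk :: "('a set \<Rightarrow> bool) \<Rightarrow> 'a set \<Rightarrow> nat" where
  "rk ind X = Max (card ` {I. I \<subseteq> X \<and> ind I})"

definition nullity :: "('a set \<Rightarrow> bool) \<Rightarrow> 'a set \<Rightarrow> int" where
  "nullity ind A = int (card A) - int (rk ind A)"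

definition corank :: "'a set \<Rightarrow> ('a set \<Rightarrow> bool) \<Rightarrow> 'a set \<Rightarrow> int" where
  "corank E ind A = int (rk ind E) - int (rk ind A)"

definition free_prod :: "'a set \<Rightarrow> ('a set \<Rightarrow> bool) \<Rightarrow> 'a set \<Rightarrow> ('a set \<Rightarrow> bool) \<Rightarrow> 'a set \<Rightarrow> bool" where
  "free_prod S indM T indN A \<longleftrightarrow>
     A \<subseteq> S \<union> T \<and> indM (A \<inter> S) \<and> corank S indM (A \<inter> S) \<ge> nullity indN (A \<inter> T)"

text \<open>Iterated free product M_0 \<box> M_1 \<box> ... \<box> M_j (left-nested; associativity makes
  the bracketing irrelevant).\<close>
fun fp_iter :: "(nat \<Rightarrow> 'a set) \<Rightarrow> (nat \<Rightarrow> 'a set \<Rightarrow> bool) \<Rightarrow> nat \<Rightarrow> 'a set \<Rightarrow> bool" where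
  "fp_iter S M 0 = M 0"
| "fp_iter S M (Suc j) = free_prod (\<Union>i\<le>j. S i) (fp_iter S M j) (S (Suc j)) (M (Suc j))"

end

theory Submission
  imports Defs
begin

text \<open>The rank of a free product is the sum of the
  ranks of its factors, so an independent set A of \<open>L = M\<^sub>1 \<box> \<dots> \<box> M\<^sub>j\<close> on
  \<open>T = S\<^sub>1 \<union> \<dots> \<union> S\<^sub>j\<close> has
  \<open>\<lambda>\<^sub>L(A) = \<Sum>\<^sub>i (\<rho>(M\<^sub>i) - |A \<inter> S\<^sub>i|) = \<Sum>\<^sub>i (\<lambda>\<^sub>M\<^sub>i(A \<inter> S\<^sub>i) - \<nu>\<^sub>M\<^sub>i(A \<inter> S\<^sub>i))\<close>.
  So the single condition \<open>\<lambda>\<^sub>L(A \<inter> T) \<ge> \<nu>\<^sub>M\<^sub>j\<^sub>+\<^sub>1(A \<inter> S\<^sub>j\<^sub>+\<^sub>1)\<close> defining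
  independence in \<open>L \<box> M\<^sub>j\<^sub>+\<^sub>1\<close> is exactly the new inequality for index j + 1.\<close>

text \<open>Just enough structure for rk to be an attained maximum on every set.\<close>
definition indep_family :: "'a set \<Rightarrow> ('a set \<Rightarrow> bool) \<Rightarrow> bool" where
  "indep_family E ind \<longleftrightarrow> finite E \<and> ind {} \<and> (\<forall>A. ind A \<longrightarrow> A \<subseteq> E)"

lemma matroid_imp_indep_family: "matroid E ind \<Longrightarrow> indep_family E ind"
  unfolding matroid_def indep_family_def by blast

lemma rk_indep:
  assumes "finite X" "ind X"
  shows "rk ind X = card X"
proof -
  have "finite (card ` {I. I \<subseteq> X \<and> ind I})"
    using assms(1) by simp
  then show ?thesis
    unfolding rk_def by (rule Max_eqI) (use assms in \<open>auto intro: card_mono\<close>)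
qed

lemma indep_family_finite_card_image:
  assumes "indep_family E ind"
  shows "finite (card ` {I. I \<subseteq> X \<and> ind I})"
proof -
  have "{I. I \<subseteq> X \<and> ind I} \<subseteq> Pow E" and "finite (Pow E)"
    using assms unfolding indep_family_def by auto
  then show ?thesis
    using finite_subset by blast
qed

lemma indep_family_card_le_rk:
  assumes "indep_family E ind" "I \<subseteq> X" "ind I"
  shows "card I \<le> rk ind X"
  unfolding rk_def using indep_family_finite_card_image[OF assms(1)] assms(2,3)
  by (auto intro: Max_ge)

lemma indep_family_rk_attained:
  assumes "indep_family E ind"
  obtains I where "I \<subseteq> X" "ind I" "card I = rk ind X"
proof -
  have "{} \<in> {I. I \<subseteq> X \<and> ind I}"
    using assms unfolding indep_family_def by simp
  then have "rk ind X \<in> card ` {I. I \<subseteq> X \<and> ind I}"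
    unfolding rk_def using indep_family_finite_card_image[OF assms]
    by (intro Max_in) blast+
  then obtain I where "I \<subseteq> X" "ind I" "rk ind X = card I"
    by blast
  then show ?thesis
    using that by simp
qed

lemma indep_family_rk_mono:
  assumes "indep_family E ind" "X \<subseteq> Y"
  shows "rk ind X \<le> rk ind Y"
proof -
  obtain I where "I \<subseteq> X" "ind I" "card I = rk ind X"
    using indep_family_rk_attained[OF assms(1)] .
  then show ?thesis
    using indep_family_card_le_rk[OF assms(1), of I Y] assms(2) by simp
qed

lemma indep_family_rk_indep:
  assumes "indep_family E ind" "ind X"
  shows "rk ind X = card X"
  using assms by (intro rk_indep) (auto simp: indep_family_def intro: finite_subset)

lemma indep_family_rk_empty: "indep_family E ind \<Longrightarrow> rk ind {} = 0"
  using indep_family_rk_indep[of E ind "{}"] by (simp add: indep_family_def)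

lemma indep_family_indep_iff_nullity_le_0:
  assumes "indep_family E ind" "X \<subseteq> E"
  shows "ind X \<longleftrightarrow> nullity ind X \<le> 0"
proof
  assume "ind X"
  then show "nullity ind X \<le> 0"
    using indep_family_rk_indep[OF assms(1)] unfolding nullity_def by simp
next
  assume "nullity ind X \<le> 0"
  then have "card X \<le> rk ind X"
    unfolding nullity_def by simp
  moreover obtain I where "I \<subseteq> X" "ind I" "card I = rk ind X"
    using indep_family_rk_attained[OF assms(1)] .
  moreover have "finite X"
    using assms finite_subset unfolding indep_family_def by blast
  ultimately show "ind X"
    using card_seteq by metis
qed

lemma corank_minus_nullity:
  "corank E ind A - nullity ind A = int (rk ind E) - int (card A)"
  unfolding corank_def nullity_def by simp

lemma indep_family_free_prod:
  assumes "indep_family S M" "indep_family T N"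
  shows "indep_family (S \<union> T) (free_prod S M T N)"
proof -
  have "corank S M {} \<ge> 0" "nullity N {} = 0"
    using indep_family_rk_empty[OF assms(1)] indep_family_rk_empty[OF assms(2)]
    unfolding corank_def nullity_def by simp_all
  then show ?thesis
    using assms unfolding indep_family_def free_prod_def by auto
qed

lemma indep_family_fp_iter:
  assumes "\<forall>i\<le>j. indep_family (S i) (M i)"
  shows "indep_family (\<Union>i\<le>j. S i) (fp_iter S M j)"
  using assms
proof (induction j)
  case 0
  then show ?case by simp
next
  case (Suc j)
  then show ?case
    using indep_family_free_prod[of "\<Union>i\<le>j. S i" "fp_iter S M j" "S (Suc j)" "M (Suc j)"]
    by (simp add: atMost_Suc Un_commute)
qed

text \<open>\<open>\<rho>(M \<box> N) = \<rho>(M) + \<rho>(N)\<close>: an independent set of the free product has at most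
  \<open>\<rho>\<^sub>M(A \<inter> S) + \<lambda>\<^sub>M(A \<inter> S) + \<rho>\<^sub>N(A \<inter> T)\<close> elements, and the union of a basis of M
  with a basis of N is independent.\<close>
lemma rk_free_prod:
  assumes M: "indep_family S M" and N: "indep_family T N" and disj: "S \<inter> T = {}"
  shows "rk (free_prod S M T N) (S \<union> T) = rk M S + rk N T"
proof -
  have card_split: "card X = card (X \<inter> S) + card (X \<inter> T)" if "X \<subseteq> S \<union> T" for X
  proof -
    have "finite S" "finite T"
      using M N unfolding indep_family_def by auto
    moreover have "X = (X \<inter> S) \<union> (X \<inter> T)"
      using that by blast
    ultimately show ?thesis
      using disj card_Un_disjoint[of "X \<inter> S" "X \<inter> T"] by auto
  qed
  have upper: "rk (free_prod S M T N) (S \<union> T) \<le> rk M S + rk N T"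
  proof -
    obtain I where I: "I \<subseteq> S \<union> T" "free_prod S M T N I"
      "card I = rk (free_prod S M T N) (S \<union> T)"
      using indep_family_rk_attained[OF indep_family_free_prod[OF M N]] .
    have "rk M (I \<inter> S) = card (I \<inter> S)" and "nullity N (I \<inter> T) \<le> corank S M (I \<inter> S)"
      using I(2) indep_family_rk_indep[OF M] unfolding free_prod_def by auto
    moreover have "rk N (I \<inter> T) \<le> rk N T"
      using indep_family_rk_mono[OF N] by blast
    ultimately show ?thesis
      using I(3) card_split[OF I(1)] unfolding nullity_def corank_def by linarith
  qed
  have lower: "rk M S + rk N T \<le> rk (free_prod S M T N) (S \<union> T)"
  proof -
    obtain B where B: "B \<subseteq> S" "M B" "card B = rk M S"
      using indep_family_rk_attained[OF M] .
    obtain C where C: "C \<subseteq> T" "N C" "card C = rk N T"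
      using indep_family_rk_attained[OF N] .
    have BC: "(B \<union> C) \<inter> S = B" "(B \<union> C) \<inter> T = C"
      using B(1) C(1) disj by blast+
    have "free_prod S M T N (B \<union> C)"
      unfolding free_prod_def corank_def nullity_def BC
      using B C indep_family_rk_indep[OF M B(2)] indep_family_rk_indep[OF N C(2)] by auto
    then have "card (B \<union> C) \<le> rk (free_prod S M T N) (S \<union> T)"
      using B(1) C(1) by (intro indep_family_card_le_rk[OF indep_family_free_prod[OF M N]]) auto
    moreover have "card (B \<union> C) = rk M S + rk N T"
      using card_split[of "B \<union> C"] B(1,3) C(1,3) BC by auto
    ultimately show ?thesis
      by simp
  qed
  from upper lower show ?thesis
    by (rule antisym)
qed

lemma rk_fp_iter:
  assumes "\<forall>i\<le>j. indep_family (S i) (M i)"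
    and "\<forall>i\<le>j. \<forall>i'\<le>j. i \<noteq> i' \<longrightarrow> S i \<inter> S i' = {}"
  shows "rk (fp_iter S M j) (\<Union>i\<le>j. S i) = (\<Sum>i\<le>j. rk (M i) (S i))"
  using assms
proof (induction j)
  case 0
  then show ?case by simp
next
  case (Suc j)
  have "S i \<inter> S (Suc j) = {}" if "i \<le> j" for i
    using Suc.prems(2) that by simp
  then have "(\<Union>i\<le>j. S i) \<inter> S (Suc j) = {}"
    by blast
  then show ?case
    using Suc rk_free_prod[OF indep_family_fp_iter _, of j S M "S (Suc j)" "M (Suc j)"]
    by (simp add: atMost_Suc Un_commute)
qed

lemma card_Int_UN_disjoint:
  assumes "finite I" "\<forall>i\<in>I. finite (S i)" "\<forall>i\<in>I. \<forall>i'\<in>I. i \<noteq> i' \<longrightarrow> S i \<inter> S i' = {}"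
  shows "card (A \<inter> (\<Union>i\<in>I. S i)) = (\<Sum>i\<in>I. card (A \<inter> S i))"
proof -
  have "A \<inter> (\<Union>i\<in>I. S i) = (\<Union>i\<in>I. A \<inter> S i)"
    by blast
  also have "card \<dots> = (\<Sum>i\<in>I. card (A \<inter> S i))"
    using assms by (intro card_UN_disjoint) auto
  finally show ?thesis .
qed

lemma corank_fp_iter:
  assumes fam: "\<forall>i\<le>j. indep_family (S i) (M i)"
    and disj: "\<forall>i\<le>j. \<forall>i'\<le>j. i \<noteq> i' \<longrightarrow> S i \<inter> S i' = {}"
    and indep: "fp_iter S M j B"
  shows "corank (\<Union>i\<le>j. S i) (fp_iter S M j) B =
    (\<Sum>i\<le>j. corank (S i) (M i) (B \<inter> S i) - nullity (M i) (B \<inter> S i))"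
proof -
  let ?T = "\<Union>i\<le>j. S i"
  have "B \<subseteq> ?T"
    using indep indep_family_fp_iter[OF fam] unfolding indep_family_def by blast
  then have card_B: "card B = (\<Sum>i\<le>j. card (B \<inter> S i))"
    using card_Int_UN_disjoint[of "{..j}" S B] fam disj
    by (simp add: indep_family_def Int_absorb2)
  have "corank ?T (fp_iter S M j) B = int (rk (fp_iter S M j) ?T) - int (card B)"
    unfolding corank_def indep_family_rk_indep[OF indep_family_fp_iter[OF fam] indep] ..
  also have "\<dots> = (\<Sum>i\<le>j. int (rk (M i) (S i)) - int (card (B \<inter> S i)))"
    unfolding rk_fp_iter[OF fam disj] card_B by (simp add: sum_subtractf)
  also have "\<dots> = (\<Sum>i\<le>j. corank (S i) (M i) (B \<inter> S i) - nullity (M i) (B \<inter> S i))"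
    by (simp add: corank_minus_nullity)
  finally show ?thesis .
qed

lemma fp_iter_iff:
  assumes "\<forall>i\<le>j. indep_family (S i) (M i)"
    and "\<forall>i\<le>j. \<forall>i'\<le>j. i \<noteq> i' \<longrightarrow> S i \<inter> S i' = {}"
  shows "fp_iter S M j A \<longleftrightarrow> A \<subseteq> (\<Union>i\<le>j. S i) \<and>
    (\<forall>j'\<le>j. (\<Sum>i<j'. corank (S i) (M i) (A \<inter> S i)) \<ge> (\<Sum>i\<le>j'. nullity (M i) (A \<inter> S i)))"
  using assms
proof (induction j arbitrary: A)
  case 0
  then have "indep_family (S 0) (M 0)"
    by simp
  then show ?case
    using indep_family_indep_iff_nullity_le_0[of "S 0" "M 0" A]
    by (auto simp: indep_family_def Int_absorb2)
next
  case (Suc j)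
  let ?T = "\<Union>i\<le>j. S i"
  let ?holds = "\<lambda>A j'. (\<Sum>i<j'. corank (S i) (M i) (A \<inter> S i)) \<ge> (\<Sum>i\<le>j'. nullity (M i) (A \<inter> S i))"
  have fam: "\<forall>i\<le>j. indep_family (S i) (M i)"
    and disj: "\<forall>i\<le>j. \<forall>i'\<le>j. i \<noteq> i' \<longrightarrow> S i \<inter> S i' = {}"
    using Suc.prems by simp_all
  have restrict: "(A \<inter> ?T) \<inter> S i = A \<inter> S i" if "i \<le> j" for i
    using that by blast
  have prefix: "fp_iter S M j (A \<inter> ?T) \<longleftrightarrow> (\<forall>j'\<le>j. ?holds A j')"
    using Suc.IH[OF fam disj, of "A \<inter> ?T"] by (simp add: restrict)
  have last: "nullity (M (Suc j)) (A \<inter> S (Suc j)) \<le> corank ?T (fp_iter S M j) (A \<inter> ?T)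
      \<longleftrightarrow> ?holds A (Suc j)" if "fp_iter S M j (A \<inter> ?T)"
    using corank_fp_iter[OF fam disj that]
    by (simp add: restrict sum_subtractf lessThan_Suc_atMost) linarith
  show ?case
    using prefix last by (auto simp: free_prod_def atMost_Suc le_Suc_eq)
qed

theorem proposition4p5:
  fixes S :: "nat \<Rightarrow> 'a set" and M :: "nat \<Rightarrow> 'a set \<Rightarrow> bool" and k :: nat and A :: "'a set"
  assumes "k \<ge> 1"
    and "\<forall>i<k. matroid (S i) (M i)"
    and "\<forall>i<k. \<forall>j<k. i \<noteq> j \<longrightarrow> S i \<inter> S j = {}"
    and "A \<subseteq> (\<Union>i<k. S i)"
  shows "fp_iter S M (k - 1) A \<longleftrightarrow>
    (\<forall>j<k. (\<Sum>i<j. corank (S i) (M i) (A \<inter> S i)) \<ge> (\<Sum>i\<le>j. nullity (M i) (A \<inter> S i)))"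
proof -
  obtain n where k: "k = Suc n"
    using assms(1) by (cases k) auto
  have "\<forall>i\<le>n. indep_family (S i) (M i)"
    using assms(2) by (simp add: k less_Suc_eq_le matroid_imp_indep_family)
  moreover have "\<forall>i\<le>n. \<forall>i'\<le>n. i \<noteq> i' \<longrightarrow> S i \<inter> S i' = {}"
    using assms(3) by (simp add: k less_Suc_eq_le)
  moreover have "A \<subseteq> (\<Union>i\<le>n. S i)"
    using assms(4) by (simp add: k lessThan_Suc_atMost)
  ultimately show ?thesis
    using fp_iter_iff[of n S M A] by (simp add: k less_Suc_eq_le)
qed

end
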